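(* Assume $\Gamma=[U^{\sf T}\ X^{\sf T}]^{\sf T}$ has full row rank and $Z=AX+BU$. Let $\Delta=[\Delta_Z^{\sf T}\ \Delta_X^{\sf T}\ \Delta_U^{\sf T}]^{\sf T}$ be a perturbation, $(Z_\Delta,X_\Delta,U_\Delta)=(Z+\Delta_Z,X+\Delta_X,U+\Delta_U)$, $\Gamma_\Delta=[U_\Delta^{\sf T}\ X_\Delta^{\sf T}]^{\sf T}$, and let $(P_\Delta,K_\Delta,G_\Delta)$ be an optimal solution of the regularized problem (RP) posed with the perturbed data. Set $M_\Delta=G_\Delta P_\Delta G_\Delta^{\sf T}$. If $$\mu>\left(-1+\sqrt{1+\frac{1}{2\|Z\|_2^2\|M_\Delta\|_2}}\right)^{-1},$$ then $A+BK_\Delta$ is Schur stable, i.e. $\rho(A+BK_\Delta)<1$.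
   Context: $A\in\mathbb{R}^{n\times n}$, $B\in\mathbb{R}^{n\times m}$; data $Z,X\in\mathbb{R}^{n\times T}$, $U\in\mathbb{R}^{m\times T}$. $Q\in\mathbb{R}^{n\times n}$ symmetric positive semidefinite, $R\in\mathbb{R}^{m\times m}$ symmetric positive definite, $\gamma\ge0$. For data $(\tilde Z,\tilde X,\tilde U)$ with $\tilde\Gamma=[\tilde U^{\sf T}\ \tilde X^{\sf T}]^{\sf T}$ and $\tilde\Pi=I_T-\tilde\Gamma^\dagger\tilde\Gamma$, problem (RP) is: minimize over $P\in\mathbb{R}^{n\times n}$ symmetric, $K\in\mathbb{R}^{m\times n}$, $G\in\mathbb{R}^{T\times n}$ the cost ${\rm tr}(QP)+{\rm tr}(K^{\sf T}RKP)+\gamma\|\tilde\Pi G\|_F^2$ subject to $\tilde ZGPG^{\sf T}\tilde Z^{\sf T}-P+I_n\preceq0$, $P\succeq I_n$, and $[K^{\sf T}\ I_n]^{\sf T}=\tilde\Gamma G$. The signal-to-perturbation ratio is $\mu=\min\big(\|Z\|_2/\|\Delta_Z\|_2,\ \sigma_{\min}(\Gamma)/\|\Delta_\Gamma\|_2\big)$ with $\Delta_\Gamma=[\Delta_U^{\sf T}\ \Delta_X^{\sf T}]^{\sf T}$ (a ratio with zero denominator is $+\infty$). $\|\cdot\|_2$ is the spectral norm, $\sigma_{\min}$ the smallest singular value, $\rho$ the spectral radius. *)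

theory Defs
  imports "HOL-Analysis.Analysis" "HOL-Library.Extended_Real"
begin

text \<open>Matrices are HOL-Analysis matrices: a p x q real matrix is real^'q^'p.
  Dimensions n, m, T are the finite index types 'n, 'm, 't.
  Stacked block matrices [M1; M2] (M1 on top) are indexed by the sum type.\<close>

definition vstack :: "real^'q^'p1 \<Rightarrow> real^'q^'p2 \<Rightarrow> real^'q^('p1 + 'p2)" where
  "vstack M1 M2 = (\<chi> i. case i of Inl a \<Rightarrow> M1 $ a | Inr b \<Rightarrow> M2 $ b)"

definition spec_norm :: "real^'q^'p \<Rightarrow> real" where
  "spec_norm M = onorm (\<lambda>x. M *v x)"

text \<open>Frobenius norm; the HOL-Analysis norm on real^'q^'p is exactly it.\<close>
definition frob_norm :: "real^'q^'p \<Rightarrow> real" where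
  "frob_norm M = sqrt (\<Sum>i\<in>UNIV. \<Sum>j\<in>UNIV. (M $ i $ j)^2)"

definition real_eigenvalues :: "real^'n^'n \<Rightarrow> real set" where
  "real_eigenvalues M = {l. \<exists>v. v \<noteq> 0 \<and> M *v v = l *s v}"

text \<open>Smallest singular value of a p x q matrix: the square root of the smallest
  eigenvalue of M M^T if p \<le> q, resp. of M^T M if q < p (i.e. the min(p,q)-th
  singular value).\<close>
definition sigma_min :: "real^'q^'p \<Rightarrow> real" where
  "sigma_min M = (if CARD('p) \<le> CARD('q)
      then sqrt (Min (real_eigenvalues (M ** transpose M)))
      else sqrt (Min (real_eigenvalues (transpose M ** M))))"

definition complex_eigenvalues :: "real^'n^'n \<Rightarrow> complex set" where
  "complex_eigenvalues M =
     {l. \<exists>v::complex^'n. v \<noteq> 0 \<and> map_matrix complex_of_real M *v v = l *s v}"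

definition spectral_radius :: "real^'n^'n \<Rightarrow> real" where
  "spectral_radius M = Max (cmod ` complex_eigenvalues M)"

definition psd :: "real^'n^'n \<Rightarrow> bool" where
  "psd M \<longleftrightarrow> (\<forall>x. 0 \<le> x \<bullet> (M *v x))"

definition loewner_le :: "real^'n^'n \<Rightarrow> real^'n^'n \<Rightarrow> bool" where
  "loewner_le M N \<longleftrightarrow> psd (N - M)"

definition pos_def :: "real^'n^'n \<Rightarrow> bool" where
  "pos_def M \<longleftrightarrow> (\<forall>x. x \<noteq> 0 \<longrightarrow> 0 < x \<bullet> (M *v x))"

definition symmetric :: "real^'n^'n \<Rightarrow> bool" where
  "symmetric M \<longleftrightarrow> transpose M = M"

definition is_pinv :: "real^'q^'p \<Rightarrow> real^'p^'q \<Rightarrow> bool" where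
  "is_pinv M P \<longleftrightarrow> M ** P ** M = M \<and> P ** M ** P = P \<and>
     transpose (M ** P) = M ** P \<and> transpose (P ** M) = P ** M"

definition pinv :: "real^'q^'p \<Rightarrow> real^'p^'q" where
  "pinv M = (THE P. is_pinv M P)"

definition Pi_proj :: "real^'t^'n \<Rightarrow> real^'t^'m \<Rightarrow> real^'t^'t" where
  "Pi_proj Xt Ut = (let Gam = vstack Ut Xt in mat 1 - pinv Gam ** Gam)"

definition RP_cost ::
  "real^'n^'n \<Rightarrow> real^'m^'m \<Rightarrow> real \<Rightarrow> real^'t^'n \<Rightarrow> real^'t^'m \<Rightarrow>
   real^'n^'n \<Rightarrow> real^'n^'m \<Rightarrow> real^'n^'t \<Rightarrow> real" where
  "RP_cost Q R \<gamma> Xt Ut P K G =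
     trace (Q ** P) + trace (transpose K ** R ** K ** P)
     + \<gamma> * (frob_norm (Pi_proj Xt Ut ** G))^2"

definition RP_feasible ::
  "real^'t^'n \<Rightarrow> real^'t^'n \<Rightarrow> real^'t^'m \<Rightarrow>
   real^'n^'n \<Rightarrow> real^'n^'m \<Rightarrow> real^'n^'t \<Rightarrow> bool" where
  "RP_feasible Zt Xt Ut P K G \<longleftrightarrow>
     symmetric P \<and>
     loewner_le (Zt ** G ** P ** transpose G ** transpose Zt - P + mat 1) 0 \<and>
     loewner_le (mat 1) P \<and>
     vstack K (mat 1) = vstack Ut Xt ** G"

definition RP_optimal ::
  "real^'n^'n \<Rightarrow> real^'m^'m \<Rightarrow> real \<Rightarrow> real^'t^'n \<Rightarrow> real^'t^'n \<Rightarrow> real^'t^'m \<Rightarrow>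
   real^'n^'n \<Rightarrow> real^'n^'m \<Rightarrow> real^'n^'t \<Rightarrow> bool" where
  "RP_optimal Q R \<gamma> Zt Xt Ut P K G \<longleftrightarrow>
     RP_feasible Zt Xt Ut P K G \<and>
     (\<forall>P' K' G'. RP_feasible Zt Xt Ut P' K' G' \<longrightarrow>
        RP_cost Q R \<gamma> Xt Ut P K G \<le> RP_cost Q R \<gamma> Xt Ut P' K' G')"

definition eratio :: "real \<Rightarrow> real \<Rightarrow> ereal" where
  "eratio a b = (if b = 0 then \<infinity> else ereal (a / b))"

definition SPR :: "real^'t^'n \<Rightarrow> real^'t^'n \<Rightarrow> real^'t^'m \<Rightarrow>
    real^'t^'n \<Rightarrow> real^'t^'n \<Rightarrow> real^'t^'m \<Rightarrow> ereal" where
  "SPR Z X U DZ DX DU =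
     min (eratio (spec_norm Z) (spec_norm DZ))
         (eratio (sigma_min (vstack U X)) (spec_norm (vstack DU DX)))"

end

theory Submission
  imports Defs "HOL-Computational_Algebra.Fundamental_Theorem_Algebra"
begin

(* Write W = [B A], so that Z = W Gamma and, by the data constraint [K; I] = Gamma_D G of (RP),
   A + B K = (Z + W Delta_Gamma) G.  Thus (A + B K) P (A + B K)^T is the matrix
   (Z + Delta_Z) M (Z + Delta_Z)^T of the LMI of (RP), M = G P G^T, with Delta_Z exchanged for
   W Delta_Gamma.  Both perturbations are small relative to Z: ||Delta_Z|| <= ||Z|| / mu, and
   ||(W Delta_Gamma)^T x|| <= (sigma_min(Gamma) / mu) ||W^T x|| <= ||Z^T x|| / mu.  The exchange
   changes the quadratic form by at most kappa |x|^2 with kappa = ||M|| ||Z||^2 (4/mu + 2/mu^2),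
   and the hypothesis on mu says exactly that kappa < 1.  Hence
   (A + B K) P (A + B K)^T <= P - (1 - kappa) I < P, a strict Lyapunov inequality for the
   transpose of A + B K with P >= I, which confines every eigenvalue to the open unit disc. *)

section \<open>Eigenvalues and the characteristic polynomial\<close>

lemma det_eq_0_iff_nontrivial_kernel:
  fixes N :: "'a::field^'n^'n"
  shows "det N = 0 \<longleftrightarrow> (\<exists>v. v \<noteq> 0 \<and> N *v v = 0)"
  using invertible_det_nz[of N] invertible_left_inverse[of N] matrix_left_invertible_ker[of N]
  by blast

lemma matrix_vector_mult_mat: "mat l *v v = l *s (v::'a::semiring_1^'n)"
proof -
  have "(\<Sum>j\<in>UNIV. (if i = j then l else 0) * v $ j) = (\<Sum>j\<in>UNIV. if i = j then l * v $ j else 0)" for i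
    by (rule sum.cong) auto
  then show ?thesis by (simp add: vec_eq_iff matrix_vector_mult_def mat_def)
qed

lemma transpose_diff: "transpose (A - B) = transpose A - (transpose B :: 'a::ring_1^'n^'m)"
  by (simp add: transpose_def vec_eq_iff)

lemma transpose_add: "transpose (A + B) = transpose A + (transpose B :: 'a::semiring_1^'n^'m)"
  by (simp add: transpose_def vec_eq_iff)

lemma eigenvector_iff_det:
  fixes S :: "'a::field^'n^'n"
  shows "(\<exists>v. v \<noteq> 0 \<and> S *v v = l *s v) \<longleftrightarrow> det (mat l - S) = 0"
  by (simp add: det_eq_0_iff_nontrivial_kernel matrix_vector_mult_diff_rdistrib
      matrix_vector_mult_mat eq_commute[of "l *s _"])

definition char_matrix :: "'a::comm_ring_1^'n^'n \<Rightarrow> 'a poly^'n^'n" where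
  "char_matrix F = (\<chi> i j. [: - F $ i $ j, of_bool (i = j) :])"

definition char_poly :: "'a::comm_ring_1^'n^'n \<Rightarrow> 'a poly" where
  "char_poly F = det (char_matrix F)"

lemma poly_char_poly: "poly (char_poly F) l = det (mat l - F)"
proof -
  have "mat l $ i $ j - F $ i $ j = poly (char_matrix F $ i $ j) l" for i j
    by (simp add: char_matrix_def mat_def)
  then show ?thesis
    unfolding char_poly_def det_def by (simp add: poly_sum poly_prod of_int_poly)
qed

lemma degree_prod_char_matrix_less:
  fixes F :: "'a::comm_ring_1^'n^'n"
  assumes "p \<noteq> id"
  shows "degree (\<Prod>i\<in>UNIV. char_matrix F $ i $ p i) < CARD('n)"
proof -
  from assms obtain k where k: "p k \<noteq> k" by (auto simp: fun_eq_iff)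
  have "degree (\<Prod>i\<in>UNIV. char_matrix F $ i $ p i) \<le> (\<Sum>i\<in>UNIV. degree (char_matrix F $ i $ p i))"
    using degree_prod_sum_le[of UNIV "\<lambda>i. char_matrix F $ i $ p i"] by simp
  also have "\<dots> \<le> (\<Sum>i\<in>UNIV. if i = k then 0 else 1)"
    by (rule sum_mono) (use k in \<open>auto simp: char_matrix_def\<close>)
  also have "\<dots> = CARD('n) - 1"
    by (simp add: sum.If_cases Compl_eq_Diff_UNIV card_Diff_singleton)
  also have "\<dots> < CARD('n)" by simp
  finally show ?thesis .
qed

lemma coeff_char_poly_card: "coeff (char_poly (F :: 'a::idom^'n^'n)) CARD('n) = 1"
proof -
  let ?c = "\<lambda>p. coeff (\<Prod>i\<in>UNIV. char_matrix F $ i $ p i) CARD('n)"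
  have diag: "degree (char_matrix F $ i $ i) = 1" "lead_coeff (char_matrix F $ i $ i) = 1" for i
    by (simp_all add: char_matrix_def)
  then have "degree (\<Prod>i\<in>UNIV. char_matrix F $ i $ i) = CARD('n)"
    by (subst degree_prod_eq_sum_degree) (auto simp: diag(1) dest: arg_cong[of _ _ degree])
  moreover have "lead_coeff (\<Prod>i\<in>UNIV. char_matrix F $ i $ i) = 1"
    by (simp add: lead_coeff_prod diag(2))
  ultimately have "?c id = 1" by simp
  moreover have "?c p = 0" if "p \<noteq> id" for p
    using degree_prod_char_matrix_less[OF that, of F] by (simp add: coeff_eq_0)
  ultimately show ?thesis
    unfolding char_poly_def det_def coeff_sum
    by (simp add: of_int_poly coeff_mult sum.remove[of _ id] permutes_id sign_id)
qed

lemma finite_eigenvalues: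
  fixes S :: "'a::field^'n^'n"
  shows "finite {l. \<exists>v. v \<noteq> 0 \<and> S *v v = l *s v}"
proof -
  have "char_poly S \<noteq> 0" using coeff_char_poly_card[of S] by auto
  then have "finite {l. poly (char_poly S) l = 0}" by (rule poly_roots_finite)
  then show ?thesis by (simp add: eigenvector_iff_det poly_char_poly)
qed

lemma eigenvector_exists:
  fixes S :: "'a::alg_closed_field^'n^'n"
  obtains l v where "v \<noteq> 0" "S *v v = l *s v"
proof -
  have "CARD('n) \<le> degree (char_poly S)"
    using coeff_char_poly_card[of S] by (intro le_degree) simp
  then obtain l where "poly (char_poly S) l = 0"
    using alg_closed_imp_poly_has_root[of "char_poly S"] by fastforce
  then show ?thesis using that by (metis eigenvector_iff_det poly_char_poly)
qed

lemma eigenvector_transpose_iff: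
  fixes S :: "'a::field^'n^'n"
  shows "(\<exists>v. v \<noteq> 0 \<and> transpose S *v v = l *s v) \<longleftrightarrow> (\<exists>v. v \<noteq> 0 \<and> S *v v = l *s v)"
  by (metis eigenvector_iff_det det_transpose transpose_diff transpose_mat)

section \<open>Quadratic forms, spectral norm and smallest singular value\<close>

lemma symmetric_inner_swap:
  fixes T :: "real^'n^'n"
  assumes "symmetric T"
  shows "y \<bullet> (T *v z) = z \<bullet> (T *v y)"
  by (metis assms symmetric_def dot_lmul_matrix inner_commute transpose_matrix_vector)

lemma psd_quadratic_form_eq_0_imp_kernel:
  fixes T :: "real^'n^'n"
  assumes sym: "symmetric T" and psd: "psd T" and y: "y \<bullet> (T *v y) = 0"
  shows "T *v y = 0"
proof (rule ccontr)
  assume "T *v y \<noteq> 0"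
  define z where "z = T *v y"
  define a where "a = z \<bullet> z"
  define c where "c = z \<bullet> (T *v z)"
  have a: "0 < a" using \<open>T *v y \<noteq> 0\<close> unfolding a_def z_def by simp
  have c: "0 \<le> c" using psd unfolding c_def psd_def by simp
  define t where "t = - a / (c + 1)"
  have t: "t < 0" and tc: "t * c = - a - t"
    unfolding t_def using a c by (simp_all add: field_simps)
  have Tyz: "T *v (y + t *\<^sub>R z) = z + t *\<^sub>R (T *v z)"
    by (simp add: z_def matrix_vector_right_distrib matrix_vector_mult_scaleR)
  have "y \<bullet> z = 0" "y \<bullet> (T *v z) = a"
    using y symmetric_inner_swap[OF sym, of y z] by (simp_all add: z_def a_def)
  then have "(y + t *\<^sub>R z) \<bullet> (T *v (y + t *\<^sub>R z)) = 2 * t * a + t * (t * c)"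
    unfolding Tyz by (simp add: inner_add_left inner_add_right a_def c_def algebra_simps)
  also have "\<dots> = t * (a - t)" by (subst tc) (simp add: algebra_simps)
  also have "\<dots> < 0" using t a by (intro mult_neg_pos) auto
  finally show False using psd[unfolded psd_def, rule_format, of "y + t *\<^sub>R z"] by simp
qed

lemma rayleigh_quotient_attains_min:
  fixes S :: "real^'n^'n"
  obtains y0 where "norm y0 = 1" "\<And>y. (y0 \<bullet> (S *v y0)) * (y \<bullet> y) \<le> y \<bullet> (S *v y)"
proof -
  let ?f = "\<lambda>y. y \<bullet> (S *v y)"
  have cont: "continuous_on (sphere 0 1) ?f"
    by (intro continuous_intros linear_continuous_on matrix_vector_mul_bounded_linear)
  have "sphere (0::real^'n) 1 \<noteq> {}"
    by (simp add: sphere_def) (metis norm_axis_1 dist_0_norm)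
  then obtain y0 where y0: "y0 \<in> sphere 0 1" and min: "\<And>y. y \<in> sphere 0 1 \<Longrightarrow> ?f y0 \<le> ?f y"
    using continuous_attains_inf[OF compact_sphere _ cont] by blast
  have "?f y0 * (y \<bullet> y) \<le> ?f y" for y
  proof (cases "y = 0")
    case False
    define u where "u = (1 / norm y) *\<^sub>R y"
    have u: "u \<in> sphere 0 1" using False unfolding u_def by simp
    have y: "y = norm y *\<^sub>R u" using False unfolding u_def by simp
    have "?f y = ?f u * (norm y)^2"
      by (subst (1 2) y) (simp add: matrix_vector_mult_scaleR power2_eq_square)
    then show ?thesis
      using mult_right_mono[OF min[OF u] zero_le_power2[of "norm y"]] by (simp add: power2_norm_eq_inner)
  qed simp
  then show ?thesis using that y0 by simp
qed

lemma symmetric_rayleigh_min_eigenvalue: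
  fixes S :: "real^'n^'n"
  assumes sym: "symmetric S"
  obtains r where "r \<in> real_eigenvalues S" "\<And>y. r * (y \<bullet> y) \<le> y \<bullet> (S *v y)"
proof -
  obtain y0 where y0: "norm y0 = 1" and min: "\<And>y. (y0 \<bullet> (S *v y0)) * (y \<bullet> y) \<le> y \<bullet> (S *v y)"
    using rayleigh_quotient_attains_min[of S] by blast
  define r where "r = y0 \<bullet> (S *v y0)"
  define T where "T = S - mat r"
  have T: "x \<bullet> (T *v x) = x \<bullet> (S *v x) - r * (x \<bullet> x)" for x
    by (simp add: T_def matrix_vector_mult_diff_rdistrib matrix_vector_mult_mat inner_diff_right
        scalar_mult_eq_scaleR)
  have "T *v y0 = 0"
  proof (rule psd_quadratic_form_eq_0_imp_kernel)
    show "symmetric T" using sym by (simp add: T_def symmetric_def transpose_diff)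
    show "psd T" using min by (simp add: psd_def T r_def)
    show "y0 \<bullet> (T *v y0) = 0" using y0 by (simp add: T r_def dot_square_norm)
  qed
  then have "S *v y0 = r *s y0"
    by (simp add: T_def matrix_vector_mult_diff_rdistrib matrix_vector_mult_mat)
  moreover have "y0 \<noteq> 0" using y0 by auto
  ultimately have "r \<in> real_eigenvalues S" unfolding real_eigenvalues_def by blast
  with min show ?thesis using that unfolding r_def by blast
qed

lemma spec_norm_nonneg: "0 \<le> spec_norm (M::real^'q^'p)"
  unfolding spec_norm_def by (rule onorm_pos_le) simp

lemma norm_matrix_vector_mult_le: "norm (M *v x) \<le> spec_norm M * norm x"
  for M :: "real^'q^'p"
  unfolding spec_norm_def by (rule onorm) simp

lemma norm_transpose_matrix_vector_mult_le: "norm (transpose M *v x) \<le> spec_norm M * norm x"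
  for M :: "real^'q^'p"
proof -
  define w where "w = transpose M *v x"
  have "norm w * norm w = x \<bullet> (M *v w)"
    unfolding w_def by (metis dot_lmul_matrix transpose_matrix_vector dot_square_norm power2_eq_square)
  also have "\<dots> \<le> norm x * (spec_norm M * norm w)"
    by (intro order_trans[OF norm_cauchy_schwarz] mult_left_mono norm_matrix_vector_mult_le) auto
  finally have "norm w * norm w \<le> norm w * (spec_norm M * norm x)"
    by (simp add: mult_ac)
  then show ?thesis
    using spec_norm_nonneg[of M] unfolding w_def[symmetric] by (cases "w = 0") auto
qed

lemma bilinear_form_le:
  fixes M :: "real^'q^'p"
  shows "\<bar>a \<bullet> (M *v b)\<bar> \<le> spec_norm M * norm a * norm b"
proof -
  have "\<bar>a \<bullet> (M *v b)\<bar> \<le> norm a * norm (M *v b)" by (rule Cauchy_Schwarz_ineq2)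
  also have "\<dots> \<le> norm a * (spec_norm M * norm b)"
    by (intro mult_left_mono norm_matrix_vector_mult_le) auto
  finally show ?thesis by (simp add: mult_ac)
qed

lemma quadratic_form_perturbation:
  fixes M :: "real^'k^'k"
  assumes u: "norm u \<le> a" and d: "norm d \<le> b"
  shows "\<bar>(u + d) \<bullet> (M *v (u + d)) - u \<bullet> (M *v u)\<bar> \<le> spec_norm M * (2 * a * b + b^2)"
proof -
  have mono: "spec_norm M * norm v * norm w \<le> spec_norm M * a' * b'"
    if "norm v \<le> a'" "norm w \<le> b'" for v w :: "real^'k" and a' b'
  proof -
    have "0 \<le> a'" using that(1) by (meson norm_ge_zero order_trans)
    then show ?thesis
      using that spec_norm_nonneg[of M] by (intro mult_mono mult_left_mono) auto
  qed
  have "\<bar>(u + d) \<bullet> (M *v (u + d)) - u \<bullet> (M *v u)\<bar> = \<bar>u \<bullet> (M *v d) + d \<bullet> (M *v u) + d \<bullet> (M *v d)\<bar>"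
    by (simp add: matrix_vector_right_distrib inner_add_left inner_add_right)
  also have "\<dots> \<le> \<bar>u \<bullet> (M *v d)\<bar> + \<bar>d \<bullet> (M *v u)\<bar> + \<bar>d \<bullet> (M *v d)\<bar>"
    by linarith
  also have "\<dots> \<le> spec_norm M * a * b + spec_norm M * b * a + spec_norm M * b * b"
    by (intro add_mono order_trans[OF bilinear_form_le mono] u d)
  also have "\<dots> = spec_norm M * (2 * a * b + b^2)"
    by (simp add: power2_eq_square algebra_simps)
  finally show ?thesis .
qed

lemma quadratic_form_transpose_conj:
  fixes Y :: "real^'k^'n" and N :: "real^'k^'k"
  shows "x \<bullet> ((Y ** N ** transpose Y) *v x) = (transpose Y *v x) \<bullet> (N *v (transpose Y *v x))"
  by (metis dot_lmul_matrix matrix_vector_mul_assoc transpose_matrix_vector)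

lemma Min_real_eigenvalues_le_rayleigh:
  fixes S :: "real^'n^'n"
  assumes "symmetric S"
  shows "Min (real_eigenvalues S) * (y \<bullet> y) \<le> y \<bullet> (S *v y)"
proof -
  obtain r where r: "r \<in> real_eigenvalues S" "\<And>y. r * (y \<bullet> y) \<le> y \<bullet> (S *v y)"
    using symmetric_rayleigh_min_eigenvalue[OF assms] by blast
  have "Min (real_eigenvalues S) \<le> r"
    using r(1) finite_eigenvalues[of S] by (simp add: real_eigenvalues_def)
  then show ?thesis
    using order_trans[OF mult_right_mono r(2)] by simp
qed

lemma Min_real_eigenvalues_nonneg:
  fixes S :: "real^'n^'n"
  assumes "symmetric S" "psd S"
  shows "0 \<le> Min (real_eigenvalues S)"
proof -
  have "finite (real_eigenvalues S)"
    unfolding real_eigenvalues_def by (rule finite_eigenvalues)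
  moreover have "real_eigenvalues S \<noteq> {}"
    using symmetric_rayleigh_min_eigenvalue[OF assms(1)] by blast
  ultimately obtain v where v: "v \<noteq> 0" "S *v v = Min (real_eigenvalues S) *s v"
    using Min_in unfolding real_eigenvalues_def by blast
  then have "0 \<le> Min (real_eigenvalues S) * (v \<bullet> v)"
    using assms(2) unfolding psd_def by (metis inner_scaleR_right scalar_mult_eq_scaleR)
  moreover have "0 < v \<bullet> v" using v(1) by simp
  ultimately show ?thesis by (simp add: zero_le_mult_iff)
qed

lemma symmetric_gram: "symmetric (M ** transpose M :: real^'p^'p)"
  by (simp add: symmetric_def matrix_transpose_mul)

lemma quadratic_form_gram:
  fixes M :: "real^'q^'p"
  shows "y \<bullet> ((M ** transpose M) *v y) = (norm (transpose M *v y))^2"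
  using quadratic_form_transpose_conj[of y M "mat 1"] by (simp add: dot_square_norm)

lemma sigma_min_nonneg:
  assumes "CARD('p) \<le> CARD('q)"
  shows "0 \<le> sigma_min (M :: real^'q^'p)"
  using assms Min_real_eigenvalues_nonneg[OF symmetric_gram, of M]
  by (simp add: sigma_min_def psd_def quadratic_form_gram)

lemma sigma_min_le_norm_transpose:
  assumes "CARD('p) \<le> CARD('q)"
  shows "sigma_min (M :: real^'q^'p) * norm y \<le> norm (transpose M *v y)"
proof -
  let ?l = "Min (real_eigenvalues (M ** transpose M))"
  have "0 \<le> ?l"
    using Min_real_eigenvalues_nonneg[OF symmetric_gram, of M] by (simp add: psd_def quadratic_form_gram)
  then have "(sigma_min M * norm y)^2 = ?l * (y \<bullet> y)"
    using assms by (simp add: sigma_min_def power_mult_distrib dot_square_norm)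
  also have "\<dots> \<le> (norm (transpose M *v y))^2"
    using Min_real_eigenvalues_le_rayleigh[OF symmetric_gram, of M y] by (simp add: quadratic_form_gram)
  finally show ?thesis
    by (rule power2_le_imp_le) simp
qed

lemma loewner_le_iff: "loewner_le M N \<longleftrightarrow> (\<forall>x. x \<bullet> (M *v x) \<le> x \<bullet> (N *v x))"
  by (simp add: loewner_le_def psd_def matrix_vector_mult_diff_rdistrib inner_diff_right)

lemma loewner_ge_1_imp_pos_def:
  assumes "loewner_le (mat 1) (P :: real^'n^'n)"
  shows "pos_def P"
  unfolding pos_def_def
proof (intro allI impI)
  fix x :: "real^'n" assume "x \<noteq> 0"
  then have "0 < x \<bullet> x" by simp
  also have "\<dots> \<le> x \<bullet> (P *v x)" using assms by (simp add: loewner_le_iff)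
  finally show "0 < x \<bullet> (P *v x)" .
qed

definition hcat :: "real^'p1^'n \<Rightarrow> real^'p2^'n \<Rightarrow> real^('p1 + 'p2)^'n" where
  "hcat M1 M2 = (\<chi> i j. case j of Inl a \<Rightarrow> M1 $ i $ a | Inr b \<Rightarrow> M2 $ i $ b)"

lemma hcat_mult_vstack: "hcat B A ** vstack M1 M2 = B ** M1 + A ** M2"
  by (simp add: vec_eq_iff matrix_matrix_mult_def hcat_def vstack_def
      UNIV_Plus_UNIV[symmetric] sum.Plus del: UNIV_Plus_UNIV)

lemma vstack_add: "vstack (A1 + A2) (B1 + B2) = vstack A1 B1 + vstack A2 B2"
  by (simp add: vstack_def vec_eq_iff split: sum.split)

section \<open>Lyapunov inequality and spectral radius\<close>

lemma transpose_map_matrix: "transpose (map_matrix f F) = map_matrix f (transpose F)"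
  by (simp add: vec_eq_iff transpose_def)

lemma Re_matrix_vector_mult_of_real:
  fixes F :: "real^'m^'n" and w :: "complex^'m"
  shows "(\<chi> i. Re ((map_matrix complex_of_real F *v w) $ i)) = F *v (\<chi> i. Re (w $ i))"
  by (simp add: vec_eq_iff matrix_vector_mult_def Re_sum)

lemma Im_matrix_vector_mult_of_real:
  fixes F :: "real^'m^'n" and w :: "complex^'m"
  shows "(\<chi> i. Im ((map_matrix complex_of_real F *v w) $ i)) = F *v (\<chi> i. Im (w $ i))"
  by (simp add: vec_eq_iff matrix_vector_mult_def Im_sum)

lemma symmetric_quadratic_form_rotation:
  fixes P :: "real^'n^'n"
  assumes "symmetric P"
  shows "(p *\<^sub>R a - q *\<^sub>R b) \<bullet> (P *v (p *\<^sub>R a - q *\<^sub>R b)) + (q *\<^sub>R a + p *\<^sub>R b) \<bullet> (P *v (q *\<^sub>R a + p *\<^sub>R b))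
    = (p^2 + q^2) * (a \<bullet> (P *v a) + b \<bullet> (P *v b))"
  using symmetric_inner_swap[OF assms, of a b]
  by (simp add: matrix_vector_mult_diff_distrib matrix_vector_right_distrib matrix_vector_mult_scaleR
      inner_add_left inner_add_right inner_diff_left inner_diff_right power2_eq_square algebra_simps)

text \<open>The Lyapunov inequality is one for the transpose of F, which has the eigenvalues of F;
  a complex eigenvector of the transpose is split into its real and imaginary parts.\<close>
lemma cmod_eigenvalue_less_1_if_lyapunov:
  fixes F P :: "real^'n^'n"
  assumes sym: "symmetric P" and pd: "pos_def P"
    and lyap: "\<And>x. x \<noteq> 0 \<Longrightarrow> x \<bullet> ((F ** P ** transpose F) *v x) < x \<bullet> (P *v x)"
    and l: "l \<in> complex_eigenvalues F"
  shows "cmod l < 1"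
proof -
  let ?q = "\<lambda>v. v \<bullet> (P *v v)"
  obtain w where w: "w \<noteq> 0" "map_matrix complex_of_real (transpose F) *v w = l *s w"
    using l eigenvector_transpose_iff[of "map_matrix complex_of_real F" l]
    unfolding complex_eigenvalues_def transpose_map_matrix by blast
  define a where "a = (\<chi> i. Re (w $ i))"
  define b where "b = (\<chi> i. Im (w $ i))"
  have ab: "a \<noteq> 0 \<or> b \<noteq> 0"
    using w(1) by (auto simp: a_def b_def vec_eq_iff complex_eq_iff)
  have decr: "?q (transpose F *v v) \<le> ?q v" for v
    using lyap[of v] by (cases "v = 0") (auto simp: quadratic_form_transpose_conj)
  have strict: "?q (transpose F *v a) + ?q (transpose F *v b) < ?q a + ?q b"
    using ab decr[of a] decr[of b] lyap[of a] lyap[of b]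
    by (auto simp: quadratic_form_transpose_conj)
  have "transpose F *v a = Re l *\<^sub>R a - Im l *\<^sub>R b"
    using Re_matrix_vector_mult_of_real[of "transpose F" w] unfolding w(2)
    by (simp add: a_def b_def vec_eq_iff)
  moreover have "transpose F *v b = Im l *\<^sub>R a + Re l *\<^sub>R b"
    using Im_matrix_vector_mult_of_real[of "transpose F" w] unfolding w(2)
    by (simp add: a_def b_def vec_eq_iff add.commute)
  ultimately have "?q (transpose F *v a) + ?q (transpose F *v b) = (cmod l)^2 * (?q a + ?q b)"
    by (simp add: symmetric_quadratic_form_rotation[OF sym] cmod_power2)
  moreover have "0 < ?q a + ?q b"
  proof -
    have "0 \<le> ?q v" for v
      using pd by (cases "v = 0") (auto simp: pos_def_def less_imp_le)
    then show ?thesis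
      using ab pd unfolding pos_def_def by (auto intro: add_pos_nonneg add_nonneg_pos)
  qed
  ultimately have "(cmod l)^2 < 1" using strict by simp
  then show ?thesis by (simp add: power_less_one_iff abs_square_less_1)
qed

lemma spectral_radius_less:
  fixes F :: "real^'n^'n"
  assumes "\<And>l. l \<in> complex_eigenvalues F \<Longrightarrow> cmod l < c"
  shows "spectral_radius F < c"
proof -
  have "finite (complex_eigenvalues F)"
    unfolding complex_eigenvalues_def by (rule finite_eigenvalues)
  moreover have "complex_eigenvalues F \<noteq> {}"
    using eigenvector_exists[of "map_matrix complex_of_real F"] unfolding complex_eigenvalues_def by blast
  ultimately show ?thesis
    using assms by (simp add: spectral_radius_def Max_less_iff)
qed

section \<open>Perturbed data\<close>

lemma le_eratio_imp_le_divide: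
  assumes "ereal r \<le> eratio a b" "0 < r" "0 \<le> a" "0 \<le> b"
  shows "b \<le> a / r"
proof (cases "b = 0")
  case False
  then have "r \<le> a / b" using assms(1) by (simp add: eratio_def)
  then show ?thesis using False assms(2,4) by (simp add: field_simps)
qed (use assms in simp)

lemma SPR_perturbation_bound:
  assumes spr: "ereal c < SPR Z X U DZ DX DU" and c: "0 \<le> c"
    and sigma: "0 \<le> sigma_min (vstack U X)"
  obtains s where "0 \<le> s" "s * c < 1" "spec_norm DZ \<le> s * spec_norm Z"
    "spec_norm (vstack DU DX) \<le> s * sigma_min (vstack U X)"
proof (cases "SPR Z X U DZ DX DU")
  case (real r)
  with spr c have r: "c < r" "0 < r" by simp_all
  have "ereal r \<le> eratio (spec_norm Z) (spec_norm DZ)"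
    "ereal r \<le> eratio (sigma_min (vstack U X)) (spec_norm (vstack DU DX))"
    using real unfolding SPR_def by (metis min.cobounded1, metis min.cobounded2)
  then have "spec_norm DZ \<le> spec_norm Z / r" "spec_norm (vstack DU DX) \<le> sigma_min (vstack U X) / r"
    using r(2) sigma by (auto intro!: le_eratio_imp_le_divide simp: spec_norm_nonneg)
  moreover have "1 / r * c < 1" using r by simp
  ultimately show thesis using that[of "1 / r"] r by simp
next
  case PInf
  then have "spec_norm DZ = 0" "spec_norm (vstack DU DX) = 0"
    by (auto simp: SPR_def min_def eratio_def split: if_splits)
  then show thesis using that[of 0] by (simp add: spec_norm_nonneg sigma)
next
  case MInf
  with spr show thesis by simp
qed

lemma perturbation_margin_less_1:
  fixes s k :: real
  assumes s: "0 \<le> s" and k: "0 \<le> k" and margin: "s * inverse (-1 + sqrt (1 + 1 / (2 * k))) < 1"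
  shows "k * (4 * s + 2 * s^2) < 1"
proof (cases "k = 0")
  case False
  define e where "e = 1 / (2 * k)"
  have e: "0 < e" using k False by (simp add: e_def)
  then have "1 < sqrt (1 + e)" by simp
  then have "1 + s < sqrt (1 + e)" using margin by (simp add: e_def field_simps)
  then have "(1 + s)^2 < (sqrt (1 + e))^2"
    using s by (intro power_strict_mono) auto
  then have "(1 + s)^2 < 1 + e" using e by simp
  then have "2 * s + s^2 < e" by (simp add: power2_eq_square algebra_simps)
  then show ?thesis using k False by (simp add: e_def field_simps)
qed simp

lemma closed_loop_eq_perturbed_data:
  assumes sys: "Z = A ** X + B ** U"
    and gain: "vstack K (mat 1) = vstack (U + DU) (X + DX) ** G"
  shows "A + B ** K = (Z + hcat B A ** vstack DU DX) ** G"
proof -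
  have "A + B ** K = hcat B A ** vstack K (mat 1)" by (simp add: hcat_mult_vstack add.commute)
  also have "\<dots> = hcat B A ** (vstack U X + vstack DU DX) ** G"
    by (simp add: gain vstack_add matrix_mul_assoc)
  also have "\<dots> = (Z + hcat B A ** vstack DU DX) ** G"
    by (simp add: sys hcat_mult_vstack matrix_add_ldistrib add.commute)
  finally show ?thesis .
qed

lemma norm_transpose_mult_perturbation_le:
  fixes W :: "real^'p^'n" and Gm D :: "real^'t^'p"
  assumes D: "spec_norm D \<le> s * sigma_min Gm" and s: "0 \<le> s"
    and sigma: "\<And>y. sigma_min Gm * norm y \<le> norm (transpose Gm *v y)"
  shows "norm (transpose (W ** D) *v x) \<le> s * norm (transpose (W ** Gm) *v x)"
proof -
  let ?w = "transpose W *v x"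
  have "norm (transpose (W ** D) *v x) = norm (transpose D *v ?w)"
    by (metis matrix_transpose_mul matrix_vector_mul_assoc)
  also have "\<dots> \<le> spec_norm D * norm ?w" by (rule norm_transpose_matrix_vector_mult_le)
  also have "\<dots> \<le> s * (sigma_min Gm * norm ?w)"
    using mult_right_mono[OF D norm_ge_zero] by (simp add: mult.assoc)
  also have "\<dots> \<le> s * norm (transpose Gm *v ?w)" using sigma s by (rule mult_left_mono)
  also have "\<dots> = s * norm (transpose (W ** Gm) *v x)"
    by (metis matrix_transpose_mul matrix_vector_mul_assoc)
  finally show ?thesis .
qed

lemma perturbed_lmi_imp_strict_lyapunov:
  fixes Z DZ D :: "real^'t^'n" and M :: "real^'t^'t" and P :: "real^'n^'n"
  assumes lmi: "loewner_le ((Z + DZ) ** M ** transpose (Z + DZ) - P + mat 1) 0"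
    and DZ: "spec_norm DZ \<le> s * spec_norm Z"
    and D: "\<And>x. norm (transpose D *v x) \<le> s * norm (transpose Z *v x)"
    and s: "0 \<le> s"
    and margin: "spec_norm M * (spec_norm Z)^2 * (4 * s + 2 * s^2) < 1"
    and x: "x \<noteq> 0"
  shows "x \<bullet> (((Z + D) ** M ** transpose (Z + D)) *v x) < x \<bullet> (P *v x)"
proof -
  let ?q = "\<lambda>v. v \<bullet> (M *v v)"
  define u where "u = transpose Z *v x"
  define e where "e = spec_norm M * (2 * (spec_norm Z * norm x) * (s * spec_norm Z * norm x)
      + (s * spec_norm Z * norm x)^2)"
  have form: "x \<bullet> (((Z + E) ** M ** transpose (Z + E)) *v x) = ?q (u + transpose E *v x)" for E
    unfolding quadratic_form_transpose_conj
    by (simp add: u_def transpose_add matrix_vector_mult_add_rdistrib)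
  have u: "norm u \<le> spec_norm Z * norm x"
    unfolding u_def by (rule norm_transpose_matrix_vector_mult_le)
  have d: "norm (transpose D *v x) \<le> s * spec_norm Z * norm x"
    using order_trans[OF D[of x, folded u_def] mult_left_mono[OF u s]] by (simp add: mult.assoc)
  have dZ: "norm (transpose DZ *v x) \<le> s * spec_norm Z * norm x"
    using order_trans[OF norm_transpose_matrix_vector_mult_le mult_right_mono[OF DZ]] by simp
  have "?q (u + transpose D *v x) \<le> ?q u + e"
    using quadratic_form_perturbation[OF u d, where M = M] unfolding e_def abs_le_iff by linarith
  moreover have "?q u \<le> ?q (u + transpose DZ *v x) + e"
    using quadratic_form_perturbation[OF u dZ, where M = M] unfolding e_def abs_le_iff by linarith
  moreover have "x \<bullet> (((Z + DZ) ** M ** transpose (Z + DZ)) *v x) \<le> x \<bullet> (P *v x) - x \<bullet> x"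
    using lmi[unfolded loewner_le_iff, rule_format, of x]
    by (simp add: matrix_vector_mult_diff_rdistrib
        matrix_vector_mult_add_rdistrib inner_diff_right inner_add_right)
  moreover have "2 * e = spec_norm M * (spec_norm Z)^2 * (4 * s + 2 * s^2) * (x \<bullet> x)"
    by (simp add: e_def power2_norm_eq_inner[symmetric] power2_eq_square algebra_simps)
  moreover have "0 < x \<bullet> x" using x by simp
  ultimately show ?thesis
    using mult_strict_right_mono[OF margin \<open>0 < x \<bullet> x\<close>] unfolding form by linarith
qed

theorem proposition6:
  fixes A :: "real^'n^'n" and B :: "real^'m^'n"
    and Z X :: "real^'t^'n" and U :: "real^'t^'m"
    and Q :: "real^'n^'n" and R :: "real^'m^'m" and \<gamma> :: real
    and DZ DX :: "real^'t^'n" and DU :: "real^'t^'m"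
    and P :: "real^'n^'n" and K :: "real^'n^'m" and G :: "real^'n^'t"
  assumes Q: "symmetric Q" "psd Q"
    and R: "symmetric R" "pos_def R"
    and gam: "\<gamma> \<ge> 0"
    and rank: "rank (vstack U X) = CARD('m + 'n)"
    and sys: "Z = A ** X + B ** U"
    and opt: "RP_optimal Q R \<gamma> (Z + DZ) (X + DX) (U + DU) P K G"
    and mu: "SPR Z X U DZ DX DU >
      ereal (inverse (-1 + sqrt (1 + 1 / (2 * (spec_norm Z)^2
                 * spec_norm (G ** P ** transpose G)))))"
  shows "spectral_radius (A + B ** K) < 1"
proof -
  define M where "M = G ** P ** transpose G"
  define c where "c = inverse (-1 + sqrt (1 + 1 / (2 * (spec_norm Z)^2 * spec_norm M)))"
  have feas: "RP_feasible (Z + DZ) (X + DX) (U + DU) P K G"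
    using opt by (simp add: RP_optimal_def)
  have card: "CARD('m + 'n) \<le> CARD('t)"
    using rank_bound[of "vstack U X"] rank by simp
  have "0 \<le> c"
    by (simp add: c_def spec_norm_nonneg)
  then obtain s where s: "0 \<le> s" "s * c < 1" "spec_norm DZ \<le> s * spec_norm Z"
      "spec_norm (vstack DU DX) \<le> s * sigma_min (vstack U X)"
    using SPR_perturbation_bound mu sigma_min_nonneg[OF card] unfolding c_def M_def by blast
  have margin: "spec_norm M * (spec_norm Z)^2 * (4 * s + 2 * s^2) < 1"
    using perturbation_margin_less_1[of s "(spec_norm Z)^2 * spec_norm M"] s(1,2) spec_norm_nonneg[of M]
    by (simp add: c_def mult_ac)
  have "hcat B A ** vstack U X = Z"
    by (simp add: sys hcat_mult_vstack add.commute)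
  then have D: "norm (transpose (hcat B A ** vstack DU DX) *v x) \<le> s * norm (transpose Z *v x)" for x
    using norm_transpose_mult_perturbation_le[OF s(4) s(1) sigma_min_le_norm_transpose[OF card]] by metis
  have "x \<bullet> (((A + B ** K) ** P ** transpose (A + B ** K)) *v x) < x \<bullet> (P *v x)" if "x \<noteq> 0" for x
    using perturbed_lmi_imp_strict_lyapunov[OF _ s(3) D s(1) margin that] feas
      closed_loop_eq_perturbed_data[OF sys, of K DU DX G]
    by (simp add: RP_feasible_def M_def matrix_mul_assoc matrix_transpose_mul)
  then show ?thesis
    using feas unfolding RP_feasible_def
    by (blast intro: spectral_radius_less cmod_eigenvalue_less_1_if_lyapunov loewner_ge_1_imp_pos_def)
qed

end
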